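(* Let $\alpha>1$. Let $N\ge1$, $0\le N_1<N$, and let $p=(p_1,\dots,p_N)$ be a probability vector with $p_1=\dots=p_{N_1}=0$ and $p_k>0$ for $N_1<k\le N$. Let $c_1,\dots,c_N$ be fixed reals, not all zero, with $0\le c_k\le1$ for $k\le N_1$, $|c_k|\le1$ for $k>N_1$, and $\sum_{k=1}^Nc_k=0$. For $0<\varepsilon\le\min_{k>N_1}p_k$ define $p(\varepsilon)$ by $p_k(\varepsilon)=c_k\varepsilon$ for $k\le N_1$ and $p_k(\varepsilon)=p_k+c_k\varepsilon$ for $k>N_1$. Write $S=\sum_{k=N_1+1}^Np_k^\alpha$ and $T=\sum_{k=N_1+1}^Nc_kp_k^{\alpha-1}$. Then, as $\varepsilon\to0+$: (i) if $T\ne0$, then $\mathcal H_\alpha(p)-\mathcal H_\alpha(p(\varepsilon))\sim\frac{\alpha\varepsilon}{\alpha-1}\,T\,S^{-1}$; (ii) if $T=0$, $1<\alpha<2$, $N_1\ge1$ and $c_k\ne0$ for some $k\le N_1$, then $\mathcal H_\alpha(p)-\mathcal H_\alpha(p(\varepsilon))\sim\frac{\varepsilon^\alpha}{\alpha-1}\Big(\sum_{k=1}^{N_1}c_k^\alpha\Big)S^{-1}$; (iii) if $T=0$, $1<\alpha<2$ and $c_k=0$ for all $k\le N_1$, then $\mathcal H_\alpha(p)-\mathcal H_\alpha(p(\varepsilon))\sim\frac{\alpha\varepsilon^2}{2}\Big(\sum_{k=N_1+1}^Nc_k^2p_k^{\alpha-2}\Big)S^{-1}$; (iv) if $T=0$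 and $\alpha=2$, then $\mathcal H_2(p)-\mathcal H_2(p(\varepsilon))\sim\varepsilon^2\Big(\sum_{k=1}^Nc_k^2\Big)\Big(\sum_{k=N_1+1}^Np_k^2\Big)^{-1}$; (v) if $T=0$ and $\alpha>2$, then $\mathcal H_\alpha(p)-\mathcal H_\alpha(p(\varepsilon))\sim\frac{\alpha\varepsilon^2}{2}\Big(\sum_{k=N_1+1}^Nc_k^2p_k^{\alpha-2}\Big)S^{-1}$.
   Context: $\mathcal H_\alpha(p)=\frac1{1-\alpha}\log\sum_kp_k^\alpha$ (Rényi entropy), with $0^\alpha=0$; logarithms are natural. $a(\varepsilon)\sim b(\varepsilon)$ means $a(\varepsilon)/b(\varepsilon)\to1$. *)

theory Defs
  imports "HOL-Analysis.Analysis" "HOL-Library.Landau_Symbols"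
begin

text \<open>Renyi entropy of order alpha of a vector p indexed by 1..N, natural log,
  with the convention 0 powr a = 0 (built into powr).\<close>
definition renyi :: "real \<Rightarrow> nat \<Rightarrow> (nat \<Rightarrow> real) \<Rightarrow> real" where
  "renyi \<alpha> N p = 1 / (1 - \<alpha>) * ln (\<Sum>k=1..N. p k powr \<alpha>)"

definition perturb :: "nat \<Rightarrow> (nat \<Rightarrow> real) \<Rightarrow> (nat \<Rightarrow> real) \<Rightarrow> real \<Rightarrow> nat \<Rightarrow> real" where
  "perturb N1 p c \<epsilon> k = (if k \<le> N1 then c k * \<epsilon> else p k + c k * \<epsilon>)"

end

theory Submission
  imports Defs
begin

(*
  With G(eps) the power sum of p(eps), the Renyi difference is (ln G(eps) - ln S) / (alpha - 1),
  which is asymptotic to (G(eps) - S) / ((alpha - 1) S) because G(eps) tends to S. The vanishing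
  coordinates contribute exactly eps^alpha * sum_{k <= N1} c_k^alpha, and the second-order Taylor
  formula for the others gives alpha T eps + eps^2 (alpha (alpha - 1) / 2 * sum c_k^2 p_k^(alpha-2) + o(1)).
  The five regimes record which of eps, eps^alpha, eps^2 dominates; at alpha = 2 the last two are
  of the same order and their coefficients add up.
*)

lemma tendsto_powr_at_right_0:
  fixes r :: real
  assumes "r > 0"
  shows "((\<lambda>x. x powr r) \<longlongrightarrow> 0) (at_right 0)"
  by (rule tendsto_zero_powrI[OF tendsto_ident_at tendsto_const _ assms])
     (auto simp: eventually_at_right_field intro: exI[of _ 1])

lemma tendsto_powr_second_order_remainder:
  fixes p c a :: real
  assumes p: "p > 0"
  shows "((\<lambda>x. ((p + c * x) powr a - p powr a - a * p powr (a - 1) * c * x) / x\<^sup>2)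
           \<longlongrightarrow> a * (a - 1) / 2 * p powr (a - 2) * c\<^sup>2) (at_right 0)"
proof -
  have "((\<lambda>x. p + c * x) \<longlongrightarrow> p) (at_right 0)"
    by (auto intro!: tendsto_eq_intros)
  then have base_pos: "\<forall>\<^sub>F x in at_right 0. p + c * x > 0"
    using p by (rule order_tendstoD(1))
  have "((\<lambda>x. (p + c * x) powr (a - 1)) has_real_derivative (a - 1) * p powr (a - 1 - 1) * c) (at 0)"
    using p by (auto intro!: derivative_eq_intros)
  then have "((\<lambda>x. ((p + c * x) powr (a - 1) - p powr (a - 1)) / x) \<longlongrightarrow> (a - 1) * p powr (a - 1 - 1) * c)
      (at_right 0)"
    unfolding has_field_derivative_iff by (auto intro: tendsto_within_subset)
  from tendsto_mult_left[OF this, of "a * c / 2"]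
  have quotient: "((\<lambda>x. (a * c * (p + c * x) powr (a - 1) - a * p powr (a - 1) * c) / (2 * x))
      \<longlongrightarrow> a * (a - 1) / 2 * p powr (a - 2) * c\<^sup>2) (at_right 0)"
    by (simp add: field_simps power2_eq_square diff_diff_eq)
  show ?thesis
  proof (rule lhopital_right_0[OF _ _ _ _ _ _ quotient])
    show "((\<lambda>x. (p + c * x) powr a - p powr a - a * p powr (a - 1) * c * x) \<longlongrightarrow> 0) (at_right 0)"
      using p by (auto intro!: tendsto_eq_intros)
    show "((\<lambda>x::real. x\<^sup>2) \<longlongrightarrow> 0) (at_right 0)"
      by (auto intro!: tendsto_eq_intros)
    show "\<forall>\<^sub>F x in at_right 0. (x::real)\<^sup>2 \<noteq> 0" and "\<forall>\<^sub>F x in at_right 0. 2 * (x::real) \<noteq> 0"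
      by (auto simp: eventually_at_right_field intro: exI[of _ 1])
    show "\<forall>\<^sub>F x in at_right 0. ((\<lambda>x. (p + c * x) powr a - p powr a - a * p powr (a - 1) * c * x)
        has_real_derivative a * c * (p + c * x) powr (a - 1) - a * p powr (a - 1) * c) (at x)"
      using base_pos by eventually_elim (auto intro!: derivative_eq_intros simp: field_simps)
    show "\<forall>\<^sub>F x in at_right 0. ((\<lambda>x::real. x\<^sup>2) has_real_derivative 2 * x) (at x)"
      by (auto intro!: derivative_eq_intros always_eventually)
  qed
qed

lemma first_order_quotient_limit:
  fixes G :: "real \<Rightarrow> real"
  assumes "\<alpha> > 1"
    and R: "((\<lambda>\<epsilon>. (G \<epsilon> - S - C * \<epsilon> powr \<alpha> - b * \<epsilon>) / \<epsilon>\<^sup>2) \<longlongrightarrow> L) (at_right 0)"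
  shows "((\<lambda>\<epsilon>. (G \<epsilon> - S) / \<epsilon>) \<longlongrightarrow> b) (at_right 0)"
proof -
  have "((\<lambda>\<epsilon>. C * \<epsilon> powr (\<alpha> - 1) + b + \<epsilon> * ((G \<epsilon> - S - C * \<epsilon> powr \<alpha> - b * \<epsilon>) / \<epsilon>\<^sup>2))
      \<longlongrightarrow> C * 0 + b + 0 * L) (at_right 0)"
    by (intro tendsto_add tendsto_mult tendsto_const tendsto_powr_at_right_0 R tendsto_ident_at)
       (use assms in simp)
  then have "((\<lambda>\<epsilon>. C * \<epsilon> powr (\<alpha> - 1) + b + \<epsilon> * ((G \<epsilon> - S - C * \<epsilon> powr \<alpha> - b * \<epsilon>) / \<epsilon>\<^sup>2))
      \<longlongrightarrow> b) (at_right 0)"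
    by simp
  moreover have "\<forall>\<^sub>F \<epsilon> in at_right 0.
      C * \<epsilon> powr (\<alpha> - 1) + b + \<epsilon> * ((G \<epsilon> - S - C * \<epsilon> powr \<alpha> - b * \<epsilon>) / \<epsilon>\<^sup>2) = (G \<epsilon> - S) / \<epsilon>"
    using eventually_at_right_less[of 0]
    by eventually_elim (simp add: powr_diff field_simps power2_eq_square)
  ultimately show ?thesis
    by (rule Lim_transform_eventually)
qed

lemma fractional_order_quotient_limit:
  fixes G :: "real \<Rightarrow> real"
  assumes "\<alpha> < 2"
    and R: "((\<lambda>\<epsilon>. (G \<epsilon> - S - C * \<epsilon> powr \<alpha>) / \<epsilon>\<^sup>2) \<longlongrightarrow> L) (at_right 0)"
  shows "((\<lambda>\<epsilon>. (G \<epsilon> - S) / \<epsilon> powr \<alpha>) \<longlongrightarrow> C) (at_right 0)"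
proof -
  have "((\<lambda>\<epsilon>. C + \<epsilon> powr (2 - \<alpha>) * ((G \<epsilon> - S - C * \<epsilon> powr \<alpha>) / \<epsilon>\<^sup>2)) \<longlongrightarrow> C + 0 * L) (at_right 0)"
    by (intro tendsto_add tendsto_mult tendsto_const tendsto_powr_at_right_0 R) (use assms in simp)
  then have "((\<lambda>\<epsilon>. C + \<epsilon> powr (2 - \<alpha>) * ((G \<epsilon> - S - C * \<epsilon> powr \<alpha>) / \<epsilon>\<^sup>2)) \<longlongrightarrow> C) (at_right 0)"
    by simp
  moreover have "\<forall>\<^sub>F \<epsilon> in at_right 0.
      C + \<epsilon> powr (2 - \<alpha>) * ((G \<epsilon> - S - C * \<epsilon> powr \<alpha>) / \<epsilon>\<^sup>2) = (G \<epsilon> - S) / \<epsilon> powr \<alpha>"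
    using eventually_at_right_less[of 0]
    by eventually_elim (simp add: powr_diff field_simps)
  ultimately show ?thesis
    by (rule Lim_transform_eventually)
qed

lemma second_order_quotient_limit:
  fixes G :: "real \<Rightarrow> real"
  assumes order: "\<alpha> \<ge> 2 \<or> C = 0"
    and R: "((\<lambda>\<epsilon>. (G \<epsilon> - S - C * \<epsilon> powr \<alpha>) / \<epsilon>\<^sup>2) \<longlongrightarrow> L) (at_right 0)"
  shows "((\<lambda>\<epsilon>. (G \<epsilon> - S) / \<epsilon>\<^sup>2) \<longlongrightarrow> (if \<alpha> = 2 then C else 0) + L) (at_right 0)"
proof -
  have "((\<lambda>\<epsilon>. C * \<epsilon> powr (\<alpha> - 2)) \<longlongrightarrow> (if \<alpha> = 2 then C else 0)) (at_right 0)"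
  proof (cases "\<alpha> = 2")
    case True
    have "\<forall>\<^sub>F \<epsilon> in at_right 0. C = C * \<epsilon> powr (\<alpha> - 2)"
      using eventually_at_right_less[of 0] by eventually_elim (simp add: True)
    from Lim_transform_eventually[OF tendsto_const this] True show ?thesis
      by simp
  next
    case False
    with order have "\<alpha> > 2 \<or> C = 0" by auto
    then show ?thesis
      using False tendsto_mult_right_zero[OF tendsto_powr_at_right_0[of "\<alpha> - 2"], of C] by auto
  qed
  then have "((\<lambda>\<epsilon>. C * \<epsilon> powr (\<alpha> - 2) + (G \<epsilon> - S - C * \<epsilon> powr \<alpha>) / \<epsilon>\<^sup>2)
      \<longlongrightarrow> (if \<alpha> = 2 then C else 0) + L) (at_right 0)"
    by (intro tendsto_add R)
  moreover have "\<forall>\<^sub>F \<epsilon> in at_right 0.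
      C * \<epsilon> powr (\<alpha> - 2) + (G \<epsilon> - S - C * \<epsilon> powr \<alpha>) / \<epsilon>\<^sup>2 = (G \<epsilon> - S) / \<epsilon>\<^sup>2"
    using eventually_at_right_less[of 0]
    by eventually_elim (simp add: powr_diff field_simps)
  ultimately show ?thesis
    by (rule Lim_transform_eventually)
qed

lemma ln_diff_asymp_equiv:
  fixes G M :: "'a \<Rightarrow> real"
  assumes S: "S > 0" and K: "K \<noteq> 0"
    and ratio: "((\<lambda>x. (G x - S) / M x) \<longlongrightarrow> K) F"
    and M: "(M \<longlongrightarrow> 0) F" "\<forall>\<^sub>F x in F. M x \<noteq> 0"
  shows "(\<lambda>x. ln (G x) - ln S) \<sim>[F] (\<lambda>x. K * M x / S)"
proof (rule asymp_equivI')
  have "((\<lambda>x. (G x - S) / M x * M x + S) \<longlongrightarrow> K * 0 + S) F"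
    by (intro tendsto_intros ratio M)
  moreover have "\<forall>\<^sub>F x in F. (G x - S) / M x * M x + S = G x"
    using M(2) by eventually_elim simp
  ultimately have "(G \<longlongrightarrow> S) F"
    by (simp add: Lim_transform_eventually)
  moreover have G_ne: "\<forall>\<^sub>F x in F. G x \<noteq> S"
    using tendsto_imp_eventually_ne[OF ratio K] by eventually_elim auto
  ultimately have "filterlim G (at S) F"
    by (rule filterlim_atI)
  then have slope: "((\<lambda>x. (ln (G x) - ln S) / (G x - S)) \<longlongrightarrow> 1 / S) F"
    by (rule filterlim_compose[OF DERIV_ln_divide[OF S, unfolded has_field_derivative_iff]])
  have "((\<lambda>x. (ln (G x) - ln S) / (G x - S) * ((G x - S) / M x) * (S / K)) \<longlongrightarrow> 1 / S * K * (S / K)) F"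
    by (intro tendsto_intros slope ratio)
  moreover have "\<forall>\<^sub>F x in F. (ln (G x) - ln S) / (G x - S) * ((G x - S) / M x) * (S / K)
      = (ln (G x) - ln S) / (K * M x / S)"
    using G_ne M(2) by eventually_elim (use S K in simp)
  ultimately show "((\<lambda>x. (ln (G x) - ln S) / (K * M x / S)) \<longlongrightarrow> 1) F"
    using S K by (simp add: Lim_transform_eventually)
qed

lemma renyi_diff_asymp_equiv:
  fixes q :: "'a \<Rightarrow> nat \<Rightarrow> real" and M :: "'a \<Rightarrow> real"
  assumes "\<alpha> > 1" and S: "(\<Sum>k=1..N. p k powr \<alpha>) = S" "S > 0" and "K \<noteq> 0"
    and "((\<lambda>x. ((\<Sum>k=1..N. q x k powr \<alpha>) - S) / M x) \<longlongrightarrow> K) F"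
    and "(M \<longlongrightarrow> 0) F" "\<forall>\<^sub>F x in F. M x \<noteq> 0"
  shows "(\<lambda>x. renyi \<alpha> N p - renyi \<alpha> N (q x)) \<sim>[F] (\<lambda>x. K * M x / S / (\<alpha> - 1))"
proof -
  have "1 / (1 - \<alpha>) = - 1 / (\<alpha> - 1)"
    using assms(1) by (simp add: field_simps)
  then have "renyi \<alpha> N p - renyi \<alpha> N (q x) = (ln (\<Sum>k=1..N. q x k powr \<alpha>) - ln S) / (\<alpha> - 1)" for x
    unfolding renyi_def S(1) by (simp add: diff_divide_distrib)
  moreover have "(\<lambda>x. (ln (\<Sum>k=1..N. q x k powr \<alpha>) - ln S) / (\<alpha> - 1)) \<sim>[F] (\<lambda>x. K * M x / S / (\<alpha> - 1))"
    using assms by (intro asymp_equiv_intros ln_diff_asymp_equiv)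
  ultimately show ?thesis
    by simp
qed

lemma renyi_diff_asymp_regimes:
  fixes q :: "real \<Rightarrow> nat \<Rightarrow> real" and \<alpha> :: real and N :: nat
  defines "G \<equiv> \<lambda>\<epsilon>. \<Sum>k=1..N. q \<epsilon> k powr \<alpha>"
  assumes \<alpha>_gt_1: "\<alpha> > 1" and S: "(\<Sum>k=1..N. p k powr \<alpha>) = S" "S > 0" and "C \<ge> 0" "L > 0"
    and expansion: "((\<lambda>\<epsilon>. (G \<epsilon> - S - C * \<epsilon> powr \<alpha> - b * \<epsilon>) / \<epsilon>\<^sup>2) \<longlongrightarrow> L) (at_right 0)"
  shows "b \<noteq> 0 \<Longrightarrow>
      (\<lambda>\<epsilon>. renyi \<alpha> N p - renyi \<alpha> N (q \<epsilon>)) \<sim>[at_right 0] (\<lambda>\<epsilon>. b * \<epsilon> / S / (\<alpha> - 1))"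
    and "b = 0 \<Longrightarrow> \<alpha> < 2 \<Longrightarrow> C \<noteq> 0 \<Longrightarrow>
      (\<lambda>\<epsilon>. renyi \<alpha> N p - renyi \<alpha> N (q \<epsilon>)) \<sim>[at_right 0] (\<lambda>\<epsilon>. C * \<epsilon> powr \<alpha> / S / (\<alpha> - 1))"
    and "b = 0 \<Longrightarrow> \<alpha> \<ge> 2 \<or> C = 0 \<Longrightarrow>
      (\<lambda>\<epsilon>. renyi \<alpha> N p - renyi \<alpha> N (q \<epsilon>)) \<sim>[at_right 0]
        (\<lambda>\<epsilon>. ((if \<alpha> = 2 then C else 0) + L) * \<epsilon>\<^sup>2 / S / (\<alpha> - 1))"
proof -
  have pos: "\<forall>\<^sub>F \<epsilon> in at_right 0. \<epsilon> > (0::real)"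
    by (rule eventually_at_right_less)
  show "b \<noteq> 0 \<Longrightarrow>
      (\<lambda>\<epsilon>. renyi \<alpha> N p - renyi \<alpha> N (q \<epsilon>)) \<sim>[at_right 0] (\<lambda>\<epsilon>. b * \<epsilon> / S / (\<alpha> - 1))"
    using first_order_quotient_limit[OF \<alpha>_gt_1 expansion] pos
    by (intro renyi_diff_asymp_equiv[OF \<alpha>_gt_1 S]) (auto simp: G_def intro: tendsto_ident_at elim: eventually_mono)
  assume "b = 0"
  then have expansion0: "((\<lambda>\<epsilon>. (G \<epsilon> - S - C * \<epsilon> powr \<alpha>) / \<epsilon>\<^sup>2) \<longlongrightarrow> L) (at_right 0)"
    using expansion by simp
  show "\<alpha> < 2 \<Longrightarrow> C \<noteq> 0 \<Longrightarrow>
      (\<lambda>\<epsilon>. renyi \<alpha> N p - renyi \<alpha> N (q \<epsilon>)) \<sim>[at_right 0] (\<lambda>\<epsilon>. C * \<epsilon> powr \<alpha> / S / (\<alpha> - 1))"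
    using fractional_order_quotient_limit[OF _ expansion0] pos \<alpha>_gt_1
    by (intro renyi_diff_asymp_equiv[OF \<alpha>_gt_1 S] tendsto_powr_at_right_0) (auto simp: G_def elim: eventually_mono)
  show "\<alpha> \<ge> 2 \<or> C = 0 \<Longrightarrow>
      (\<lambda>\<epsilon>. renyi \<alpha> N p - renyi \<alpha> N (q \<epsilon>)) \<sim>[at_right 0]
        (\<lambda>\<epsilon>. ((if \<alpha> = 2 then C else 0) + L) * \<epsilon>\<^sup>2 / S / (\<alpha> - 1))"
    using second_order_quotient_limit[OF _ expansion0] pos \<open>C \<ge> 0\<close> \<open>L > 0\<close>
    by (intro renyi_diff_asymp_equiv[OF \<alpha>_gt_1 S])
       (auto simp: G_def add_nonneg_pos intro!: tendsto_eq_intros elim: eventually_mono)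
qed

lemma sum_split_nat_ivl:
  fixes f :: "nat \<Rightarrow> 'a::comm_monoid_add"
  assumes "m \<le> n"
  shows "sum f {1..n} = sum f {1..m} + sum f {m+1..n}"
  using sum.ub_add_nat[of 1 m f "n - m"] assms by simp

lemma tail_weighted_square_sum_pos:
  fixes c p :: "nat \<Rightarrow> real"
  assumes "N1 \<le> N" and sum_zero: "(\<Sum>k=1..N. c k) = 0" and nonzero: "\<exists>k\<in>{1..N}. c k \<noteq> 0"
    and nonneg: "\<And>k. k \<in> {1..N1} \<Longrightarrow> c k \<ge> 0" and p: "\<And>k. k \<in> {N1+1..N} \<Longrightarrow> p k > 0"
  shows "(\<Sum>k=N1+1..N. (c k)\<^sup>2 * p k powr r) > 0"
proof -
  have "\<exists>k\<in>{N1+1..N}. c k \<noteq> 0"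
  proof (rule ccontr)
    assume "\<not> ?thesis"
    then have above: "\<forall>k\<in>{N1+1..N}. c k = 0" by auto
    then have "(\<Sum>k=1..N1. c k) = 0"
      using sum_split_nat_ivl[OF assms(1), of c] sum_zero by simp
    then have "\<forall>k\<in>{1..N1}. c k = 0"
      using sum_nonneg_eq_0_iff[of "{1..N1}" c] nonneg by auto
    with above nonzero show False
      by (metis Suc_eq_plus1 atLeastAtMost_iff not_less_eq_eq)
  qed
  then obtain k where k: "k \<in> {N1+1..N}" "c k \<noteq> 0" by blast
  show ?thesis
    by (rule sum_pos2[OF _ k(1)]) (use k p[OF k(1)] in \<open>auto simp: zero_less_mult_iff\<close>)
qed

lemma perturb_power_sum_expansion:
  fixes p c :: "nat \<Rightarrow> real"
  assumes "N1 \<le> N" and p: "\<And>k. k \<in> {N1+1..N} \<Longrightarrow> p k > 0"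
    and c: "\<And>k. k \<in> {1..N1} \<Longrightarrow> c k \<ge> 0"
  shows "((\<lambda>\<epsilon>. ((\<Sum>k=1..N. perturb N1 p c \<epsilon> k powr \<alpha>) - (\<Sum>k=N1+1..N. p k powr \<alpha>)
            - (\<Sum>k=1..N1. c k powr \<alpha>) * \<epsilon> powr \<alpha>
            - \<alpha> * (\<Sum>k=N1+1..N. c k * p k powr (\<alpha> - 1)) * \<epsilon>) / \<epsilon>\<^sup>2)
          \<longlongrightarrow> \<alpha> * (\<alpha> - 1) / 2 * (\<Sum>k=N1+1..N. (c k)\<^sup>2 * p k powr (\<alpha> - 2))) (at_right 0)"
proof -
  have "((\<lambda>\<epsilon>. \<Sum>k=N1+1..N. ((p k + c k * \<epsilon>) powr \<alpha> - p k powr \<alpha> - \<alpha> * p k powr (\<alpha> - 1) * c k * \<epsilon>) / \<epsilon>\<^sup>2)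
        \<longlongrightarrow> (\<Sum>k=N1+1..N. \<alpha> * (\<alpha> - 1) / 2 * p k powr (\<alpha> - 2) * (c k)\<^sup>2)) (at_right 0)"
    using p by (intro tendsto_sum tendsto_powr_second_order_remainder) auto
  moreover have "\<forall>\<^sub>F \<epsilon> in at_right 0.
      (\<Sum>k=N1+1..N. ((p k + c k * \<epsilon>) powr \<alpha> - p k powr \<alpha> - \<alpha> * p k powr (\<alpha> - 1) * c k * \<epsilon>) / \<epsilon>\<^sup>2)
    = ((\<Sum>k=1..N. perturb N1 p c \<epsilon> k powr \<alpha>) - (\<Sum>k=N1+1..N. p k powr \<alpha>)
            - (\<Sum>k=1..N1. c k powr \<alpha>) * \<epsilon> powr \<alpha>
            - \<alpha> * (\<Sum>k=N1+1..N. c k * p k powr (\<alpha> - 1)) * \<epsilon>) / \<epsilon>\<^sup>2"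
    using eventually_at_right_less[of 0]
  proof eventually_elim
    case (elim \<epsilon>)
    have "(\<Sum>k=1..N1. perturb N1 p c \<epsilon> k powr \<alpha>) = (\<Sum>k=1..N1. c k powr \<alpha>) * \<epsilon> powr \<alpha>"
      unfolding sum_distrib_right using elim c by (intro sum.cong) (auto simp: perturb_def powr_mult)
    moreover have "(\<Sum>k=N1+1..N. perturb N1 p c \<epsilon> k powr \<alpha>) = (\<Sum>k=N1+1..N. (p k + c k * \<epsilon>) powr \<alpha>)"
      by (intro sum.cong) (auto simp: perturb_def)
    ultimately show ?case
      using sum_split_nat_ivl[OF assms(1), of "\<lambda>k. perturb N1 p c \<epsilon> k powr \<alpha>"]
      by (simp add: sum_divide_distrib[symmetric] sum_subtractf sum_distrib_left sum_distrib_right mult_ac)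
  qed
  ultimately have "((\<lambda>\<epsilon>. ((\<Sum>k=1..N. perturb N1 p c \<epsilon> k powr \<alpha>) - (\<Sum>k=N1+1..N. p k powr \<alpha>)
            - (\<Sum>k=1..N1. c k powr \<alpha>) * \<epsilon> powr \<alpha>
            - \<alpha> * (\<Sum>k=N1+1..N. c k * p k powr (\<alpha> - 1)) * \<epsilon>) / \<epsilon>\<^sup>2)
          \<longlongrightarrow> (\<Sum>k=N1+1..N. \<alpha> * (\<alpha> - 1) / 2 * p k powr (\<alpha> - 2) * (c k)\<^sup>2)) (at_right 0)"
    by (rule Lim_transform_eventually)
  then show ?thesis
    by (simp add: sum_distrib_left mult_ac)
qed

theorem mainTheorem9:
  fixes \<alpha> :: real and N N1 :: nat and p c :: "nat \<Rightarrow> real"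
  assumes "\<alpha> > 1" and "N \<ge> 1" and "N1 < N"
    and "\<And>k. k \<in> {1..N1} \<Longrightarrow> p k = 0"
    and "\<And>k. k \<in> {N1+1..N} \<Longrightarrow> p k > 0"
    and "(\<Sum>k=1..N. p k) = 1"
    and "\<exists>k\<in>{1..N}. c k \<noteq> 0"
    and "\<And>k. k \<in> {1..N1} \<Longrightarrow> 0 \<le> c k \<and> c k \<le> 1"
    and "\<And>k. k \<in> {N1+1..N} \<Longrightarrow> \<bar>c k\<bar> \<le> 1"
    and "(\<Sum>k=1..N. c k) = 0"
  defines "S \<equiv> (\<Sum>k=N1+1..N. p k powr \<alpha>)"
    and "T \<equiv> (\<Sum>k=N1+1..N. c k * p k powr (\<alpha> - 1))"
    and "D \<equiv> (\<lambda>\<epsilon>. renyi \<alpha> N p - renyi \<alpha> N (perturb N1 p c \<epsilon>))"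
  shows
    "(T \<noteq> 0 \<longrightarrow> D \<sim>[at_right 0] (\<lambda>\<epsilon>. \<alpha> * \<epsilon> / (\<alpha> - 1) * T / S))
   \<and> (T = 0 \<and> \<alpha> < 2 \<and> N1 \<ge> 1 \<and> (\<exists>k\<in>{1..N1}. c k \<noteq> 0) \<longrightarrow>
        D \<sim>[at_right 0] (\<lambda>\<epsilon>. \<epsilon> powr \<alpha> / (\<alpha> - 1) * (\<Sum>k=1..N1. c k powr \<alpha>) / S))
   \<and> (T = 0 \<and> \<alpha> < 2 \<and> (\<forall>k\<in>{1..N1}. c k = 0) \<longrightarrow>
        D \<sim>[at_right 0] (\<lambda>\<epsilon>. \<alpha> * \<epsilon>\<^sup>2 / 2 * (\<Sum>k=N1+1..N. (c k)\<^sup>2 * p k powr (\<alpha> - 2)) / S))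
   \<and> (T = 0 \<and> \<alpha> = 2 \<longrightarrow>
        D \<sim>[at_right 0] (\<lambda>\<epsilon>. \<epsilon>\<^sup>2 * (\<Sum>k=1..N. (c k)\<^sup>2) / (\<Sum>k=N1+1..N. (p k)\<^sup>2)))
   \<and> (T = 0 \<and> \<alpha> > 2 \<longrightarrow>
        D \<sim>[at_right 0] (\<lambda>\<epsilon>. \<alpha> * \<epsilon>\<^sup>2 / 2 * (\<Sum>k=N1+1..N. (c k)\<^sup>2 * p k powr (\<alpha> - 2)) / S))"
proof -
  have N1_le: "N1 \<le> N" using assms(3) by simp
  have S_eq: "(\<Sum>k=1..N. p k powr \<alpha>) = S"
    using sum_split_nat_ivl[OF N1_le, of "\<lambda>k. p k powr \<alpha>"] assms(4) by (simp add: S_def)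
  have S_pos: "S > 0"
    unfolding S_def by (rule sum_pos) (use assms(3,5) in fastforce)+
  define C where "C = (\<Sum>k=1..N1. c k powr \<alpha>)"
  define Q where "Q = (\<Sum>k=N1+1..N. (c k)\<^sup>2 * p k powr (\<alpha> - 2))"
  have C_nonneg: "C \<ge> 0"
    unfolding C_def by (simp add: sum_nonneg)
  have "Q > 0"
    unfolding Q_def by (rule tail_weighted_square_sum_pos[OF N1_le assms(10,7)]) (use assms(5,8) in auto)
  with assms(1) have L_pos: "\<alpha> * (\<alpha> - 1) / 2 * Q > 0" by simp
  have "((\<lambda>\<epsilon>. ((\<Sum>k=1..N. perturb N1 p c \<epsilon> k powr \<alpha>) - S - C * \<epsilon> powr \<alpha> - \<alpha> * T * \<epsilon>) / \<epsilon>\<^sup>2)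
      \<longlongrightarrow> \<alpha> * (\<alpha> - 1) / 2 * Q) (at_right 0)"
    unfolding S_def C_def T_def Q_def
    by (rule perturb_power_sum_expansion[OF N1_le assms(5)]) (use assms(8) in auto)
  note regimes = renyi_diff_asymp_regimes[OF assms(1) S_eq S_pos C_nonneg L_pos this, folded D_def]
  have case_ii: "D \<sim>[at_right 0] (\<lambda>\<epsilon>. \<epsilon> powr \<alpha> / (\<alpha> - 1) * (\<Sum>k=1..N1. c k powr \<alpha>) / S)"
    if "T = 0" "\<alpha> < 2" "j \<in> {1..N1}" "c j \<noteq> 0" for j
  proof -
    have "C > 0"
      unfolding C_def by (rule sum_pos2[OF _ \<open>j \<in> {1..N1}\<close>]) (use that assms(8) in \<open>auto simp: order.order_iff_strict\<close>)
    with regimes(2) that show ?thesis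
      by (simp add: C_def field_simps)
  qed
  have case_iii_v: "D \<sim>[at_right 0] (\<lambda>\<epsilon>. \<alpha> * \<epsilon>\<^sup>2 / 2 * (\<Sum>k=N1+1..N. (c k)\<^sup>2 * p k powr (\<alpha> - 2)) / S)"
    if "T = 0" "\<alpha> > 2 \<or> C = 0" "\<alpha> \<noteq> 2"
  proof -
    have "D \<sim>[at_right 0] (\<lambda>\<epsilon>. (0 + \<alpha> * (\<alpha> - 1) / 2 * Q) * \<epsilon>\<^sup>2 / S / (\<alpha> - 1))"
      using regimes(3) that by auto
    also have "(\<lambda>\<epsilon>. (0 + \<alpha> * (\<alpha> - 1) / 2 * Q) * \<epsilon>\<^sup>2 / S / (\<alpha> - 1)) = (\<lambda>\<epsilon>. \<alpha> * \<epsilon>\<^sup>2 / 2 * Q / S)"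
      using assms(1) by (simp add: fun_eq_iff)
    finally show ?thesis
      by (simp add: Q_def)
  qed
  have case_iv: "D \<sim>[at_right 0] (\<lambda>\<epsilon>. \<epsilon>\<^sup>2 * (\<Sum>k=1..N. (c k)\<^sup>2) / (\<Sum>k=N1+1..N. (p k)\<^sup>2))"
    if "T = 0" and \<alpha>_eq_2: "\<alpha> = 2"
  proof -
    have "C = (\<Sum>k=1..N1. (c k)\<^sup>2)"
      unfolding C_def \<alpha>_eq_2 by (intro sum.cong) (use assms(8) in \<open>auto simp: order.order_iff_strict\<close>)
    moreover have "Q = (\<Sum>k=N1+1..N. (c k)\<^sup>2)"
      unfolding Q_def \<alpha>_eq_2 by (intro sum.cong) (use assms(5) in fastforce)+
    moreover have "S = (\<Sum>k=N1+1..N. (p k)\<^sup>2)"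
      unfolding S_def \<alpha>_eq_2 by (intro sum.cong) (use assms(5) in fastforce)+
    ultimately show ?thesis
      using regimes(3) that sum_split_nat_ivl[OF N1_le, of "\<lambda>k. (c k)\<^sup>2"] by (simp add: mult_ac)
  qed
  show ?thesis
    using regimes(1) case_ii case_iii_v case_iv assms(1) by (auto simp: C_def field_simps)
qed

end
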